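(* (Structure of pre-$\mathbb{Z}/2\mathbb{Z}$-Frobenius manifolds.) With $H$, $\eta$, $Y$ constructed as in the context, suppose that $Y$ has $G$-degree $e$ as an element of $\mathrm{T}\llbracket H^\ast\rrbracket=\prod_n (H^\ast)^{\otimes n}$, and that $\eta_i,\eta_v,\eta_g$ are $S^2$-homogeneous of degrees $(i,i)$, $(v,v)$, $(g,g)$ respectively. Then $((H,\rho),\eta,Y)$ is a pre-$\mathbb{Z}/2\mathbb{Z}$-Frobenius manifold. Conversely, the $\eta$ and $Y$ of any pre-$\mathbb{Z}/2\mathbb{Z}$-Frobenius manifold $((H,\rho),\eta,Y)$ are of this form, and are uniquely determined by the metrics and potentials of the two Frobenius manifolds it contains (on $H_e$ and on $H^G$).
   Context: $G=\mathbb{Z}/2\mathbb{Z}=\{e,g\}$, $k$ a field of characteristic zero. Let $(H_e,\eta_e,Y_e)$ and $(H^G,\eta^G,Y^G)$ be formal Frobenius manifolds (potentials in the power series ring satisfying WDVV). Suppose there is a vector space $H_i$ with linear injections $\iota_e:H_i\to H_e$, $\iota^G:H_i\to H^G$ such that $\iota_e^\ast Y_e=(\iota^G)^\ast Y^G=:Y_i$ and $\iota_e^\ast\eta_e=(\iota^G)^\ast\eta^G=:\eta_i$. Fix decompositions $H_e=H_i\oplus H_v$, $H^G=H_i\oplus H_g$, and write $Y_e=Y_i+Y_v$, $Y^G=Y_i+Y_g$, $\eta_e=\eta_i+\eta_v$, $\eta^G=\eta_i+\eta_g$ with $\iota_e^\ast Y_v=(\iota^G)^\ast Y_g=0$ and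 $\iota_e^\ast\eta_v=(\iota^G)^\ast\eta_g=0$. Let $H:=H_i\oplus H_v\oplus H_g$ be the $\mathbb{Z}/2\mathbb{Z}$-graded $\mathbb{Z}/2\mathbb{Z}$-module with $H_e=H_i\oplus H_v$ in degree $e$, $H_g$ in degree $g$, where $g$ acts trivially on $H_i$ and $H_g$ and by $-1$ on $H_v$. Set $Y:=Y_i+Y_v+Y_g$ and $\eta:=\eta_i+\eta_v+\eta_g$, extended by zero. With $S=\{i,v,g\}$, homogeneous terms have $S^n$-degrees. A pre-$G$-Frobenius manifold $((H,\rho),\eta,Y)$ is: a finite dimensional self-invariant $G$-graded $G$-module, a $G$-invariant nondegenerate symmetric bilinear form $\eta$ preserving the $G$-grading, and $Y=\sum_{n\ge3}Y^n$ with each $Y^n$ a $B_n$-invariant $n$-linear form on $H$ of $G$-degree $e$ (with $B_n$ acting through the braiding $v\otimes w\mapsto (h\cdot w)\otimes v$ for $v\in H_h$), such that the restrictions of $Y$ and $\eta$ to $H_e$ and to $H^G$ are formal Frobenius manifolds. *)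

theory Defs
  imports Complex_Main
begin

text \<open>
  The group G = Z/2Z = {e,g} acts through
  rho = rho(g) (rho(e) is the identity).  A tensor-algebra element
  Y = sum_n Y^n is represented as a single function on lists of vectors,
  the n-th component being its restriction to lists of length n.
\<close>

definition bilinear_on :: "('k::field \<Rightarrow> 'v::ab_group_add \<Rightarrow> 'v) \<Rightarrow> 'v set \<Rightarrow> ('v \<Rightarrow> 'v \<Rightarrow> 'k) \<Rightarrow> bool" where
  "bilinear_on scale V eta \<longleftrightarrow>
     (\<forall>a x y z. x \<in> V \<longrightarrow> y \<in> V \<longrightarrow> z \<in> V \<longrightarrow>
        eta (scale a x + y) z = a * eta x z + eta y z \<and>
        eta z (scale a x + y) = a * eta z x + eta z y)"

definition multilinear_on :: "('k::field \<Rightarrow> 'v::ab_group_add \<Rightarrow> 'v) \<Rightarrow> 'v set \<Rightarrow> ('v list \<Rightarrow> 'k) \<Rightarrow> bool" where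
  "multilinear_on scale V Y \<longleftrightarrow>
     (\<forall>xs ys a x y. set xs \<subseteq> V \<longrightarrow> set ys \<subseteq> V \<longrightarrow> x \<in> V \<longrightarrow> y \<in> V \<longrightarrow>
        Y (xs @ (scale a x + y) # ys) = a * Y (xs @ x # ys) + Y (xs @ y # ys))"

text \<open>Symmetry (invariance under all adjacent transpositions, hence under S_n).\<close>
definition symmetric_on :: "'v set \<Rightarrow> ('v list \<Rightarrow> 'k) \<Rightarrow> bool" where
  "symmetric_on V Y \<longleftrightarrow>
     (\<forall>xs ys x y. set xs \<subseteq> V \<longrightarrow> set ys \<subseteq> V \<longrightarrow> x \<in> V \<longrightarrow> y \<in> V \<longrightarrow>
        Y (xs @ x # y # ys) = Y (xs @ y # x # ys))"

definition fin_dim_on :: "('k::field \<Rightarrow> 'v::ab_group_add \<Rightarrow> 'v) \<Rightarrow> 'v set \<Rightarrow> bool" where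
  "fin_dim_on scale V \<longleftrightarrow> (\<exists>B. finite B \<and> B \<subseteq> V \<and> module.span scale B = V)"

text \<open>bs is a basis of V and bs' is its eta-dual basis, i.e.
  bs'_e = sum_f eta^{ef} bs_f, with eta^{ef} the inverse Gram matrix.\<close>
definition dual_bases :: "('k::field \<Rightarrow> 'v::ab_group_add \<Rightarrow> 'v) \<Rightarrow> 'v set \<Rightarrow> ('v \<Rightarrow> 'v \<Rightarrow> 'k)
    \<Rightarrow> 'v list \<Rightarrow> 'v list \<Rightarrow> bool" where
  "dual_bases scale V eta bs bs' \<longleftrightarrow>
     distinct bs \<and> \<not> module.dependent scale (set bs) \<and> set bs \<subseteq> V \<and>
     module.span scale (set bs) = V \<and>
     length bs' = length bs \<and> set bs' \<subseteq> V \<and>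
     (\<forall>i<length bs. \<forall>j<length bs. eta (bs ! i) (bs' ! j) = (if i = j then 1 else 0))"

text \<open>WDVV equation, in the (polarized) tensor form: for all n and all
  a,b,c,d,x_1..x_n,
  sum_{S subset [n]} sum_{e,f} Y(a,b,e_e,x_S) eta^{ef} Y(e_f,c,d,x_{S^c})
    = sum_S sum_{e,f} Y(a,c,e_e,x_S) eta^{ef} Y(e_f,b,d,x_{S^c}).\<close>
definition WDVV_on :: "('k::field \<Rightarrow> 'v::ab_group_add \<Rightarrow> 'v) \<Rightarrow> 'v set \<Rightarrow> ('v \<Rightarrow> 'v \<Rightarrow> 'k)
    \<Rightarrow> ('v list \<Rightarrow> 'k) \<Rightarrow> bool" where
  "WDVV_on scale V eta Y \<longleftrightarrow>
     (\<forall>bs bs'. dual_bases scale V eta bs bs' \<longrightarrow>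
       (\<forall>a b c d xs. a \<in> V \<longrightarrow> b \<in> V \<longrightarrow> c \<in> V \<longrightarrow> d \<in> V \<longrightarrow> set xs \<subseteq> V \<longrightarrow>
          (\<Sum>S\<in>Pow {..<length xs}. \<Sum>j<length bs.
              Y (a # b # bs ! j # nths xs S) * Y (bs' ! j # c # d # nths xs (- S)))
        = (\<Sum>S\<in>Pow {..<length xs}. \<Sum>j<length bs.
              Y (a # c # bs ! j # nths xs S) * Y (bs' ! j # b # d # nths xs (- S)))))"

definition formal_frobenius :: "('k::field \<Rightarrow> 'v::ab_group_add \<Rightarrow> 'v) \<Rightarrow> 'v set \<Rightarrow> ('v \<Rightarrow> 'v \<Rightarrow> 'k)
    \<Rightarrow> ('v list \<Rightarrow> 'k) \<Rightarrow> bool" where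
  "formal_frobenius scale V eta Y \<longleftrightarrow>
     module.subspace scale V \<and> fin_dim_on scale V \<and>
     bilinear_on scale V eta \<and>
     (\<forall>x\<in>V. \<forall>y\<in>V. eta x y = eta y x) \<and>
     (\<forall>x\<in>V. (\<forall>y\<in>V. eta x y = 0) \<longrightarrow> x = 0) \<and>
     (\<forall>xs. set xs \<subseteq> V \<longrightarrow> length xs < 3 \<longrightarrow> Y xs = 0) \<and>
     multilinear_on scale V Y \<and> symmetric_on V Y \<and>
     WDVV_on scale V eta Y"

text \<open>G-degree e of Y: Y vanishes on every homogeneous component
  H_{h_1} x ... x H_{h_n} with h_1...h_n = g (odd number of factors in H_g).
  The list ds records the degrees (True = g, False = e).\<close>
definition G_degree_e :: "'v set \<Rightarrow> 'v set \<Rightarrow> ('v list \<Rightarrow> 'k::zero) \<Rightarrow> bool" where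
  "G_degree_e He Hg Y \<longleftrightarrow>
     (\<forall>xs ds. length ds = length xs \<longrightarrow>
        (\<forall>j<length xs. (ds ! j \<longrightarrow> xs ! j \<in> Hg) \<and> (\<not> ds ! j \<longrightarrow> xs ! j \<in> He)) \<longrightarrow>
        odd (length (filter id ds)) \<longrightarrow> Y xs = 0)"

text \<open>Invariance under the braid group B_n acting through the braiding
  v (x) w |-> (h.w) (x) v for v in H_h (checked on the generators).\<close>
definition braid_invariant :: "'v set \<Rightarrow> 'v set \<Rightarrow> ('v \<Rightarrow> 'v) \<Rightarrow> ('v list \<Rightarrow> 'k) \<Rightarrow> bool" where
  "braid_invariant He Hg rho Y \<longleftrightarrow>
     (\<forall>xs ys x y.
        (x \<in> He \<longrightarrow> Y (xs @ x # y # ys) = Y (xs @ y # x # ys)) \<and>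
        (x \<in> Hg \<longrightarrow> Y (xs @ x # y # ys) = Y (xs @ rho y # x # ys)))"

definition fixed_space :: "('v \<Rightarrow> 'v) \<Rightarrow> 'v set" where
  "fixed_space rho = {x. rho x = x}"

text \<open>Pre-Z/2Z-Frobenius manifold ((H,rho),eta,Y) with H = UNIV, grading
  H = He (+) Hg, and rho the action of the generator g.\<close>
definition pre_Z2_frobenius :: "('k::field \<Rightarrow> 'v::ab_group_add \<Rightarrow> 'v) \<Rightarrow> 'v set \<Rightarrow> 'v set
    \<Rightarrow> ('v \<Rightarrow> 'v) \<Rightarrow> ('v \<Rightarrow> 'v \<Rightarrow> 'k) \<Rightarrow> ('v list \<Rightarrow> 'k) \<Rightarrow> bool" where
  "pre_Z2_frobenius scale He Hg rho eta Y \<longleftrightarrow>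
     \<comment> \<open>finite dimensional G-graded G-module, self-invariant\<close>
     fin_dim_on scale UNIV \<and>
     module.subspace scale He \<and> module.subspace scale Hg \<and>
     He \<inter> Hg = {0} \<and> (\<forall>x. \<exists>a\<in>He. \<exists>b\<in>Hg. x = a + b) \<and>
     Vector_Spaces.linear scale scale rho \<and> (\<forall>x. rho (rho x) = x) \<and>
     rho ` He \<subseteq> He \<and> rho ` Hg \<subseteq> Hg \<and>
     (\<forall>x\<in>Hg. rho x = x) \<and>
     \<comment> \<open>metric\<close>
     bilinear_on scale UNIV eta \<and> (\<forall>x y. eta x y = eta y x) \<and>
     (\<forall>x. (\<forall>y. eta x y = 0) \<longrightarrow> x = 0) \<and>
     (\<forall>x y. eta (rho x) (rho y) = eta x y) \<and>
     (\<forall>x\<in>He. \<forall>y\<in>Hg. eta x y = 0) \<and>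
     \<comment> \<open>Y = sum_{n>=3} Y^n\<close>
     (\<forall>xs. length xs < 3 \<longrightarrow> Y xs = 0) \<and>
     multilinear_on scale UNIV Y \<and>
     braid_invariant He Hg rho Y \<and>
     G_degree_e He Hg Y \<and>
     \<comment> \<open>restrictions to He and to H^G\<close>
     formal_frobenius scale He eta Y \<and>
     formal_frobenius scale (fixed_space rho) eta Y"

definition direct3 :: "('k::field \<Rightarrow> 'v::ab_group_add \<Rightarrow> 'v) \<Rightarrow> 'v set \<Rightarrow> 'v set \<Rightarrow> 'v set \<Rightarrow> bool" where
  "direct3 scale A B C \<longleftrightarrow>
     module.subspace scale A \<and> module.subspace scale B \<and> module.subspace scale C \<and>
     (\<forall>a b c. a \<in> A \<longrightarrow> b \<in> B \<longrightarrow> c \<in> C \<longrightarrow> a + b + c = 0 \<longrightarrow> a = 0 \<and> b = 0 \<and> c = 0) \<and>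
     (\<forall>x. \<exists>a\<in>A. \<exists>b\<in>B. \<exists>c\<in>C. x = a + b + c)"

definition set_plus :: "'v::ab_group_add set \<Rightarrow> 'v set \<Rightarrow> 'v set" where
  "set_plus A B = {a + b | a b. a \<in> A \<and> b \<in> B}"

definition pr1 :: "'v::ab_group_add set \<Rightarrow> 'v set \<Rightarrow> 'v set \<Rightarrow> 'v \<Rightarrow> 'v" where
  "pr1 A B C x = (SOME a. a \<in> A \<and> (\<exists>b\<in>B. \<exists>c\<in>C. x = a + b + c))"
definition pr2 :: "'v::ab_group_add set \<Rightarrow> 'v set \<Rightarrow> 'v set \<Rightarrow> 'v \<Rightarrow> 'v" where
  "pr2 A B C x = (SOME b. b \<in> B \<and> (\<exists>a\<in>A. \<exists>c\<in>C. x = a + b + c))"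
definition pr3 :: "'v::ab_group_add set \<Rightarrow> 'v set \<Rightarrow> 'v set \<Rightarrow> 'v \<Rightarrow> 'v" where
  "pr3 A B C x = (SOME c. c \<in> C \<and> (\<exists>a\<in>A. \<exists>b\<in>B. x = a + b + c))"

text \<open>eta_i, eta_v, eta_g extended by zero (Hi = A, Hv = B, Hg = C;
  eta_e lives on A (+) B, eta^G on A (+) C).\<close>
definition eta_i where
  "eta_i A B C eta_e x y = eta_e (pr1 A B C x) (pr1 A B C y)"
definition eta_v where
  "eta_v A B C eta_e x y =
     eta_e (pr1 A B C x + pr2 A B C x) (pr1 A B C y + pr2 A B C y) - eta_i A B C eta_e x y"
definition eta_g where
  "eta_g A B C eta_e eta_G x y =
     eta_G (pr1 A B C x + pr3 A B C x) (pr1 A B C y + pr3 A B C y) - eta_i A B C eta_e x y"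
definition eta_glue where
  "eta_glue A B C eta_e eta_G x y =
     eta_i A B C eta_e x y + eta_v A B C eta_e x y + eta_g A B C eta_e eta_G x y"

definition Y_i where
  "Y_i A B C Y_e xs = Y_e (map (pr1 A B C) xs)"
definition Y_v where
  "Y_v A B C Y_e xs = Y_e (map (\<lambda>x. pr1 A B C x + pr2 A B C x) xs) - Y_i A B C Y_e xs"
definition Y_g where
  "Y_g A B C Y_e Y_G xs = Y_G (map (\<lambda>x. pr1 A B C x + pr3 A B C x) xs) - Y_i A B C Y_e xs"
definition Y_glue where
  "Y_glue A B C Y_e Y_G xs = Y_i A B C Y_e xs + Y_v A B C Y_e xs + Y_g A B C Y_e Y_G xs"

text \<open>S^2-homogeneity of degree (s,s): the form lives on H_s (x) H_s.\<close>
definition hom2 :: "('v \<Rightarrow> 'v) \<Rightarrow> ('v \<Rightarrow> 'v \<Rightarrow> 'k) \<Rightarrow> bool" where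
  "hom2 P f \<longleftrightarrow> (\<forall>x y. f x y = f (P x) (P y))"

end

theory Submission
  imports Defs
begin

text \<open>The involution \<open>rho\<close> splits \<open>H\<^sub>e\<close> into its eigenspaces \<open>H\<^sub>i \<oplus> H\<^sub>v\<close> for \<open>1\<close> and
  \<open>-1\<close>, so \<open>H = H\<^sub>i \<oplus> H\<^sub>v \<oplus> H\<^sub>g\<close> and \<open>H\<^sup>G = H\<^sub>i \<oplus> H\<^sub>g\<close>. Braiding an element of \<open>H\<^sub>g\<close> past an
  element of \<open>H\<^sub>v\<close> twists the latter by \<open>rho\<close>, i.e. changes its sign, so \<open>Y\<close> vanishes on
  every tensor with arguments in both \<open>H\<^sub>v\<close> and \<open>H\<^sub>g\<close>; likewise \<open>rho\<close>-invariance makes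
  \<open>eta\<close> block diagonal. Multilinear expansion then recovers \<open>eta\<close> and \<open>Y\<close> from their
  restrictions to \<open>H\<^sub>e\<close> and \<open>H\<^sup>G\<close> by inclusion-exclusion over \<open>H\<^sub>i\<close>, which gives
  uniqueness. Conversely, every axiom of the glued data is inherited from one of the two
  Frobenius manifolds; the \<open>S\<^sup>2\<close>-homogeneity of \<open>eta\<^sub>v\<close> and \<open>eta\<^sub>g\<close> supplies the
  orthogonality of the three summands needed for nondegeneracy.\<close>

definition form_orthogonal :: "('v \<Rightarrow> 'v \<Rightarrow> 'k::zero) \<Rightarrow> 'v set \<Rightarrow> 'v set \<Rightarrow> bool" where
  "form_orthogonal eta U W \<longleftrightarrow> (\<forall>u\<in>U. \<forall>w\<in>W. eta u w = 0 \<and> eta w u = 0)"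

lemma form_orthogonalD:
  "form_orthogonal eta U W \<Longrightarrow> u \<in> U \<Longrightarrow> w \<in> W \<Longrightarrow> eta u w = 0 \<and> eta w u = 0"
  unfolding form_orthogonal_def by simp

lemma formal_frobeniusD:
  assumes "formal_frobenius scale V eta Y"
  shows "module.subspace scale V" "fin_dim_on scale V" "bilinear_on scale V eta"
    and "\<forall>x\<in>V. \<forall>y\<in>V. eta x y = eta y x" "\<forall>x\<in>V. (\<forall>y\<in>V. eta x y = 0) \<longrightarrow> x = 0"
    and "\<forall>xs. set xs \<subseteq> V \<longrightarrow> length xs < 3 \<longrightarrow> Y xs = 0"
    and "multilinear_on scale V Y" "symmetric_on V Y"
  using assms unfolding formal_frobenius_def by simp_all

lemma eta_glue_eq:
  fixes eta_e eta_G :: "'v::ab_group_add \<Rightarrow> 'v \<Rightarrow> 'k::ab_group_add"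
  shows "eta_glue A B C eta_e eta_G x y =
      eta_e (pr1 A B C x + pr2 A B C x) (pr1 A B C y + pr2 A B C y)
    + eta_G (pr1 A B C x + pr3 A B C x) (pr1 A B C y + pr3 A B C y)
    - eta_e (pr1 A B C x) (pr1 A B C y)"
  unfolding eta_glue_def eta_i_def eta_v_def eta_g_def by (simp add: algebra_simps)

lemma Y_glue_eq:
  fixes Y_e Y_G :: "'v::ab_group_add list \<Rightarrow> 'k::ab_group_add"
  shows "Y_glue A B C Y_e Y_G xs =
      Y_e (map (\<lambda>x. pr1 A B C x + pr2 A B C x) xs)
    + Y_G (map (\<lambda>x. pr1 A B C x + pr3 A B C x) xs)
    - Y_e (map (pr1 A B C) xs)"
  unfolding Y_glue_def Y_i_def Y_v_def Y_g_def by (simp add: algebra_simps)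

lemma symmetric_on_compose:
  assumes "symmetric_on V Y" "range p \<subseteq> V"
  shows "symmetric_on UNIV (\<lambda>xs. Y (map p xs))"
  unfolding symmetric_on_def
proof (intro allI impI)
  fix xs ys x y
  have "set (map p zs) \<subseteq> V" for zs using assms(2) by auto
  then show "Y (map p (xs @ x # y # ys)) = Y (map p (xs @ y # x # ys))"
    using assms(1)[unfolded symmetric_on_def, rule_format, of "map p xs" "map p ys" "p x" "p y"] assms(2)
    by (simp add: range_subsetD)
qed

lemma symmetric_on_add_forms:
  "symmetric_on V Y \<Longrightarrow> symmetric_on V Z \<Longrightarrow> symmetric_on V (\<lambda>xs. Y xs + Z xs)"
  unfolding symmetric_on_def by simp

lemma symmetric_on_diff_forms:
  "symmetric_on V Y \<Longrightarrow> symmetric_on V Z \<Longrightarrow> symmetric_on V (\<lambda>xs. Y xs - Z xs)"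
  unfolding symmetric_on_def by simp

context vector_space
begin

lemma linear_endo_simps:
  assumes "Vector_Spaces.linear scale scale f"
  shows "f (x + y) = f x + f y" "f (a *s x) = a *s f x" "f 0 = 0" "f (- x) = - f x"
    and "f (x - y) = f x - f y"
  using assms by (simp_all add: module_hom_iff_linear[symmetric] module_hom.add module_hom.scale
      module_hom.zero module_hom.neg module_hom.diff)

lemma multilinear_on_add:
  assumes "multilinear_on scale V Y" "set xs \<subseteq> V" "set ys \<subseteq> V" "x \<in> V" "y \<in> V"
  shows "Y (xs @ (x + y) # ys) = Y (xs @ x # ys) + Y (xs @ y # ys)"
  using assms unfolding multilinear_on_def by (metis scale_one mult_1)

lemma multilinear_on_zero:
  assumes "multilinear_on scale V Y" "set xs \<subseteq> V" "set ys \<subseteq> V" "0 \<in> V"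
  shows "Y (xs @ 0 # ys) = 0"
  using assms(1)[unfolded multilinear_on_def, rule_format, of xs ys 0 0 "- 1"] assms by simp

lemma multilinear_on_UNIV_neg:
  assumes "multilinear_on scale UNIV Y"
  shows "Y (xs @ (- x) # ys) = - Y (xs @ x # ys)"
  using assms[unfolded multilinear_on_def, rule_format, of xs ys x 0 "- 1"]
    multilinear_on_zero[OF assms, of xs ys]
  by (simp add: scale_minus_left)

lemma bilinear_on_add:
  assumes "bilinear_on scale V eta" "x \<in> V" "y \<in> V" "z \<in> V"
  shows "eta (x + y) z = eta x z + eta y z" "eta z (x + y) = eta z x + eta z y"
  using assms unfolding bilinear_on_def by (metis scale_one mult_1)+

lemma bilinear_on_zero:
  assumes "bilinear_on scale V eta" "z \<in> V" "0 \<in> V"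
  shows "eta 0 z = 0" "eta z 0 = 0"
  using assms unfolding bilinear_on_def by (metis add_0 add_cancel_right_left scale_one mult_1)+

lemma bilinear_on_UNIV_neg:
  assumes "bilinear_on scale UNIV eta"
  shows "eta (- x) z = - eta x z" "eta z (- x) = - eta z x"
  using assms[unfolded bilinear_on_def, rule_format, of x 0 z "- 1"]
    bilinear_on_zero[OF assms, of z]
  by (simp_all add: scale_minus_left)

lemma bilinear_on_compose:
  assumes "bilinear_on scale V f" "Vector_Spaces.linear scale scale p" "range p \<subseteq> V"
  shows "bilinear_on scale UNIV (\<lambda>x y. f (p x) (p y))"
  using assms unfolding bilinear_on_def by (simp add: linear_endo_simps[OF assms(2)] range_subsetD)

lemma bilinear_on_add_forms:
  "bilinear_on scale V f \<Longrightarrow> bilinear_on scale V g \<Longrightarrow> bilinear_on scale V (\<lambda>x y. f x y + g x y)"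
  unfolding bilinear_on_def by (simp add: algebra_simps)

lemma bilinear_on_diff_forms:
  "bilinear_on scale V f \<Longrightarrow> bilinear_on scale V g \<Longrightarrow> bilinear_on scale V (\<lambda>x y. f x y - g x y)"
  unfolding bilinear_on_def by (simp add: algebra_simps)

lemma multilinear_on_compose:
  assumes "multilinear_on scale V Y" "Vector_Spaces.linear scale scale p" "range p \<subseteq> V"
  shows "multilinear_on scale UNIV (\<lambda>xs. Y (map p xs))"
  unfolding multilinear_on_def
proof (intro allI impI)
  fix xs ys :: "'b list" and a x y
  have "set (map p zs) \<subseteq> V" for zs using assms(3) by auto
  then show "Y (map p (xs @ (a *s x + y) # ys)) = a * Y (map p (xs @ x # ys)) + Y (map p (xs @ y # ys))"
    using assms(1)[unfolded multilinear_on_def, rule_format, of "map p xs" "map p ys" "p x" "p y" a] assms(3)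
    by (simp add: linear_endo_simps[OF assms(2)] range_subsetD)
qed

lemma multilinear_on_add_forms:
  "multilinear_on scale V Y \<Longrightarrow> multilinear_on scale V Z \<Longrightarrow>
     multilinear_on scale V (\<lambda>xs. Y xs + Z xs)"
  unfolding multilinear_on_def by (simp add: algebra_simps)

lemma multilinear_on_diff_forms:
  "multilinear_on scale V Y \<Longrightarrow> multilinear_on scale V Z \<Longrightarrow>
     multilinear_on scale V (\<lambda>xs. Y xs - Z xs)"
  unfolding multilinear_on_def by (simp add: algebra_simps)

lemma dual_bases_cong:
  assumes "\<forall>x\<in>V. \<forall>y\<in>V. eta' x y = eta x y"
  shows "dual_bases scale V eta' bs bs' \<longleftrightarrow> dual_bases scale V eta bs bs'"
proof -
  have "eta' (bs ! i) (bs' ! j) = eta (bs ! i) (bs' ! j)"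
    if "set bs \<subseteq> V" "set bs' \<subseteq> V" "length bs' = length bs" "i < length bs" "j < length bs" for i j
    using that assms by (metis nth_mem subsetD)
  then show ?thesis unfolding dual_bases_def by auto
qed

lemma WDVV_on_cong:
  assumes eta: "\<forall>x\<in>V. \<forall>y\<in>V. eta' x y = eta x y"
    and Y: "\<forall>xs. set xs \<subseteq> V \<longrightarrow> Y' xs = Y xs"
  shows "WDVV_on scale V eta' Y' \<longleftrightarrow> WDVV_on scale V eta Y"
proof -
  have terms:
    "(\<Sum>S\<in>Pow {..<length xs}. \<Sum>j<length bs. Y' (a # b # bs ! j # nths xs S) * Y' (bs' ! j # c # d # nths xs (- S)))
   = (\<Sum>S\<in>Pow {..<length xs}. \<Sum>j<length bs. Y (a # b # bs ! j # nths xs S) * Y (bs' ! j # c # d # nths xs (- S)))"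
    if D: "dual_bases scale V eta bs bs'" and "a \<in> V" "b \<in> V" "c \<in> V" "d \<in> V" "set xs \<subseteq> V"
    for bs bs' a b c d xs
  proof (intro sum.cong refl)
    fix S j assume "j \<in> {..<length bs}"
    moreover have "set bs \<subseteq> V" "set bs' \<subseteq> V" "length bs' = length bs"
      using D unfolding dual_bases_def by simp_all
    ultimately have "bs ! j \<in> V" "bs' ! j \<in> V" by (auto dest: nth_mem)
    moreover have "set (nths xs T) \<subseteq> V" for T
      using set_nths_subset that(6) by (rule order_trans)
    ultimately show "Y' (a # b # bs ! j # nths xs S) * Y' (bs' ! j # c # d # nths xs (- S))
      = Y (a # b # bs ! j # nths xs S) * Y (bs' ! j # c # d # nths xs (- S))"
      using that Y by simp
  qed
  show ?thesis unfolding WDVV_on_def dual_bases_cong[OF eta]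
    by (intro iff_allI imp_cong refl) (simp add: terms)
qed

lemma formal_frobenius_cong:
  assumes F: "formal_frobenius scale V eta Y"
    and eta: "\<forall>x\<in>V. \<forall>y\<in>V. eta' x y = eta x y"
    and Y: "\<forall>xs. set xs \<subseteq> V \<longrightarrow> Y' xs = Y xs"
  shows "formal_frobenius scale V eta' Y'"
proof -
  have "subspace V" by (rule formal_frobeniusD(1)[OF F])
  then have closed: "a *s x + y \<in> V" if "x \<in> V" "y \<in> V" for a x y
    using that by (simp add: subspace_add subspace_scale)
  have "bilinear_on scale V eta' \<longleftrightarrow> bilinear_on scale V eta"
    unfolding bilinear_on_def using eta by (simp add: closed)
  moreover have "multilinear_on scale V Y' \<longleftrightarrow> multilinear_on scale V Y"
    unfolding multilinear_on_def using Y by (simp add: closed)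
  moreover have "symmetric_on V Y' \<longleftrightarrow> symmetric_on V Y"
    unfolding symmetric_on_def using Y by simp
  ultimately show ?thesis
    using F eta Y WDVV_on_cong[OF eta Y] unfolding formal_frobenius_def by simp
qed

section \<open>Direct sums of three subspaces\<close>

lemma direct3D:
  assumes "direct3 scale A B C"
  shows "subspace A" "subspace B" "subspace C" "0 \<in> A" "0 \<in> B" "0 \<in> C"
    and "\<And>a b c. a \<in> A \<Longrightarrow> b \<in> B \<Longrightarrow> c \<in> C \<Longrightarrow> a + b + c = 0 \<Longrightarrow> a = 0 \<and> b = 0 \<and> c = 0"
    and "\<exists>a\<in>A. \<exists>b\<in>B. \<exists>c\<in>C. x = a + b + c"
  using assms subspace_0 unfolding direct3_def by simp_all

lemma direct3_unique:
  assumes d: "direct3 scale A B C"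
    and mem: "a \<in> A" "b \<in> B" "c \<in> C" "a' \<in> A" "b' \<in> B" "c' \<in> C"
    and eq: "a + b + c = a' + b' + c'"
  shows "a = a' \<and> b = b' \<and> c = c'"
proof -
  have "a - a' \<in> A" "b - b' \<in> B" "c - c' \<in> C"
    using mem direct3D(1-3)[OF d] by (simp_all add: subspace_diff)
  moreover have "(a - a') + (b - b') + (c - c') = 0" using eq by (simp add: algebra_simps)
  ultimately have "a - a' = 0 \<and> b - b' = 0 \<and> c - c' = 0" by (rule direct3D(7)[OF d])
  then show ?thesis by simp
qed

lemma direct3_pr_eq:
  assumes d: "direct3 scale A B C"
    and x: "x = a + b + c" and mem: "a \<in> A" "b \<in> B" "c \<in> C"
  shows "pr1 A B C x = a" "pr2 A B C x = b" "pr3 A B C x = c"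
proof -
  have "\<exists>a'. a' \<in> A \<and> (\<exists>b'\<in>B. \<exists>c'\<in>C. x = a' + b' + c')" using x mem by blast
  from someI_ex[OF this] obtain b' c' where
    "pr1 A B C x \<in> A" "b' \<in> B" "c' \<in> C" "a + b + c = pr1 A B C x + b' + c'"
    unfolding pr1_def x by blast
  from direct3_unique[OF d mem this] show "pr1 A B C x = a" by (elim conjE) (rule sym)
  have "\<exists>b'. b' \<in> B \<and> (\<exists>a'\<in>A. \<exists>c'\<in>C. x = a' + b' + c')" using x mem by blast
  from someI_ex[OF this] obtain a' c' where
    "pr2 A B C x \<in> B" "a' \<in> A" "c' \<in> C" "a + b + c = a' + pr2 A B C x + c'"
    unfolding pr2_def x by blast
  from direct3_unique[OF d mem this(2,1,3,4)] show "pr2 A B C x = b" by (elim conjE) (rule sym)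
  have "\<exists>c'. c' \<in> C \<and> (\<exists>a'\<in>A. \<exists>b'\<in>B. x = a' + b' + c')" using x mem by blast
  from someI_ex[OF this] obtain a' b' where
    "pr3 A B C x \<in> C" "a' \<in> A" "b' \<in> B" "a + b + c = a' + b' + pr3 A B C x"
    unfolding pr3_def x by blast
  from direct3_unique[OF d mem this(2,3,1,4)] show "pr3 A B C x = c" by (elim conjE) (rule sym)
qed

lemma direct3_decomp:
  assumes d: "direct3 scale A B C"
  shows "pr1 A B C x + pr2 A B C x + pr3 A B C x = x"
    and "pr1 A B C x \<in> A" "pr2 A B C x \<in> B" "pr3 A B C x \<in> C"
proof -
  obtain a b c where "x = a + b + c" "a \<in> A" "b \<in> B" "c \<in> C"
    using direct3D(8)[OF d] by blast
  with direct3_pr_eq[OF d this]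
  show "pr1 A B C x + pr2 A B C x + pr3 A B C x = x"
    and "pr1 A B C x \<in> A" "pr2 A B C x \<in> B" "pr3 A B C x \<in> C" by simp_all
qed

lemma direct3_pr_summand:
  assumes d: "direct3 scale A B C"
  shows "a \<in> A \<Longrightarrow> pr1 A B C a = a \<and> pr2 A B C a = 0 \<and> pr3 A B C a = 0"
    and "b \<in> B \<Longrightarrow> pr1 A B C b = 0 \<and> pr2 A B C b = b \<and> pr3 A B C b = 0"
    and "c \<in> C \<Longrightarrow> pr1 A B C c = 0 \<and> pr2 A B C c = 0 \<and> pr3 A B C c = c"
  using direct3_pr_eq[OF d _ _ direct3D(5,6)[OF d], of a a]
    direct3_pr_eq[OF d _ direct3D(4)[OF d] _ direct3D(6)[OF d], of b b]
    direct3_pr_eq[OF d _ direct3D(4,5)[OF d], of c c]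
  by simp_all

lemma direct3_pr_add:
  assumes d: "direct3 scale A B C"
  shows "pr1 A B C (x + y) = pr1 A B C x + pr1 A B C y"
    and "pr2 A B C (x + y) = pr2 A B C x + pr2 A B C y"
    and "pr3 A B C (x + y) = pr3 A B C x + pr3 A B C y"
proof -
  note D = direct3_decomp[OF d] and sub = direct3D(1-3)[OF d]
  let ?p1 = "pr1 A B C" and ?p2 = "pr2 A B C" and ?p3 = "pr3 A B C"
  have "x + y = (?p1 x + ?p2 x + ?p3 x) + (?p1 y + ?p2 y + ?p3 y)" by (simp only: D(1))
  then have "x + y = (?p1 x + ?p1 y) + (?p2 x + ?p2 y) + (?p3 x + ?p3 y)"
    by (simp add: algebra_simps)
  moreover have "?p1 x + ?p1 y \<in> A" "?p2 x + ?p2 y \<in> B" "?p3 x + ?p3 y \<in> C"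
    using D(2-4) sub by (simp_all add: subspace_add)
  ultimately show "?p1 (x + y) = ?p1 x + ?p1 y" "?p2 (x + y) = ?p2 x + ?p2 y"
    "?p3 (x + y) = ?p3 x + ?p3 y"
    by (rule direct3_pr_eq[OF d])+
qed

lemma direct3_pr_scale:
  assumes d: "direct3 scale A B C"
  shows "pr1 A B C (k *s x) = k *s pr1 A B C x"
    and "pr2 A B C (k *s x) = k *s pr2 A B C x"
    and "pr3 A B C (k *s x) = k *s pr3 A B C x"
proof -
  note D = direct3_decomp[OF d] and sub = direct3D(1-3)[OF d]
  let ?p1 = "pr1 A B C" and ?p2 = "pr2 A B C" and ?p3 = "pr3 A B C"
  have "k *s x = k *s (?p1 x + ?p2 x + ?p3 x)" by (simp only: D(1))
  then have "k *s x = k *s ?p1 x + k *s ?p2 x + k *s ?p3 x" by (simp add: scale_right_distrib)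
  moreover have "k *s ?p1 x \<in> A" "k *s ?p2 x \<in> B" "k *s ?p3 x \<in> C"
    using D(2-4) sub by (simp_all add: subspace_scale)
  ultimately show "?p1 (k *s x) = k *s ?p1 x" "?p2 (k *s x) = k *s ?p2 x"
    "?p3 (k *s x) = k *s ?p3 x"
    by (rule direct3_pr_eq[OF d])+
qed

lemma direct3_pr_linear:
  assumes d: "direct3 scale A B C"
  shows "Vector_Spaces.linear scale scale (pr1 A B C)"
    and "Vector_Spaces.linear scale scale (\<lambda>x. pr1 A B C x + pr2 A B C x)"
    and "Vector_Spaces.linear scale scale (\<lambda>x. pr1 A B C x + pr3 A B C x)"
  by (simp_all add: Vector_Spaces.linear_iff vector_space_axioms direct3_pr_add[OF d]
      direct3_pr_scale[OF d] scale_right_distrib algebra_simps)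

lemma direct3_set_plus_mem:
  assumes d: "direct3 scale A B C"
  shows "pr1 A B C x \<in> set_plus A B" "pr1 A B C x + pr2 A B C x \<in> set_plus A B"
    and "pr1 A B C x \<in> set_plus A C" "pr1 A B C x + pr3 A B C x \<in> set_plus A C"
    and "A \<subseteq> set_plus A B" "B \<subseteq> set_plus A B" "A \<subseteq> set_plus A C" "C \<subseteq> set_plus A C"
proof -
  note z = direct3D(4-6)[OF d]
  show "A \<subseteq> set_plus A B" "B \<subseteq> set_plus A B" "A \<subseteq> set_plus A C" "C \<subseteq> set_plus A C"
    unfolding set_plus_def using z by force+
  then show "pr1 A B C x \<in> set_plus A B" "pr1 A B C x \<in> set_plus A C"
    using direct3_decomp(2)[OF d] by blast+
  show "pr1 A B C x + pr2 A B C x \<in> set_plus A B" "pr1 A B C x + pr3 A B C x \<in> set_plus A C"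
    unfolding set_plus_def using direct3_decomp(2-4)[OF d] by blast+
qed

lemma direct3_pr_on_set_plus:
  assumes d: "direct3 scale A B C"
  shows "x \<in> set_plus A B \<Longrightarrow> pr1 A B C x + pr2 A B C x = x \<and> pr3 A B C x = 0"
    and "x \<in> set_plus A C \<Longrightarrow> pr1 A B C x + pr3 A B C x = x \<and> pr2 A B C x = 0"
proof -
  show "x \<in> set_plus A B \<Longrightarrow> pr1 A B C x + pr2 A B C x = x \<and> pr3 A B C x = 0"
  proof -
    assume "x \<in> set_plus A B"
    then obtain a b where "x = a + b + 0" "a \<in> A" "b \<in> B" unfolding set_plus_def by auto
    from direct3_pr_eq[OF d this direct3D(6)[OF d]] \<open>x = a + b + 0\<close> show ?thesis by simp
  qed
  show "x \<in> set_plus A C \<Longrightarrow> pr1 A B C x + pr3 A B C x = x \<and> pr2 A B C x = 0"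
  proof -
    assume "x \<in> set_plus A C"
    then obtain a c where "x = a + 0 + c" "a \<in> A" "c \<in> C" unfolding set_plus_def by auto
    from direct3_pr_eq[OF d this(1,2) direct3D(5)[OF d] this(3)] \<open>x = a + 0 + c\<close> show ?thesis by simp
  qed
qed

section \<open>Gluing along a common summand\<close>

lemma bilinear_on_eta_glue:
  assumes d: "direct3 scale A B C"
    and e: "bilinear_on scale (set_plus A B) eta_e" and g: "bilinear_on scale (set_plus A C) eta_G"
  shows "bilinear_on scale UNIV (eta_glue A B C eta_e eta_G)"
proof -
  note lin = direct3_pr_linear[OF d] and mem = direct3_set_plus_mem[OF d]
  have "bilinear_on scale UNIV (\<lambda>x y.
        eta_e (pr1 A B C x + pr2 A B C x) (pr1 A B C y + pr2 A B C y)
      + eta_G (pr1 A B C x + pr3 A B C x) (pr1 A B C y + pr3 A B C y)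
      - eta_e (pr1 A B C x) (pr1 A B C y))"
    using mem by (intro bilinear_on_diff_forms bilinear_on_add_forms
        bilinear_on_compose[OF e lin(2)] bilinear_on_compose[OF g lin(3)]
        bilinear_on_compose[OF e lin(1)]) auto
  then show ?thesis by (simp add: eta_glue_eq[abs_def])
qed

lemma multilinear_on_Y_glue:
  assumes d: "direct3 scale A B C"
    and e: "multilinear_on scale (set_plus A B) Y_e" and g: "multilinear_on scale (set_plus A C) Y_G"
  shows "multilinear_on scale UNIV (Y_glue A B C Y_e Y_G)"
proof -
  note lin = direct3_pr_linear[OF d] and mem = direct3_set_plus_mem[OF d]
  have "multilinear_on scale UNIV (\<lambda>xs.
        Y_e (map (\<lambda>x. pr1 A B C x + pr2 A B C x) xs)
      + Y_G (map (\<lambda>x. pr1 A B C x + pr3 A B C x) xs)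
      - Y_e (map (pr1 A B C) xs))"
    using mem by (intro multilinear_on_diff_forms multilinear_on_add_forms
        multilinear_on_compose[OF e lin(2)] multilinear_on_compose[OF g lin(3)]
        multilinear_on_compose[OF e lin(1)]) auto
  then show ?thesis by (simp add: Y_glue_eq[abs_def])
qed

lemma symmetric_on_Y_glue:
  fixes Y_e Y_G :: "'b list \<Rightarrow> 'c::ab_group_add"
  assumes d: "direct3 scale A B C"
    and e: "symmetric_on (set_plus A B) Y_e" and g: "symmetric_on (set_plus A C) Y_G"
  shows "symmetric_on UNIV (Y_glue A B C Y_e Y_G)"
proof -
  note mem = direct3_set_plus_mem[OF d]
  have "symmetric_on UNIV (\<lambda>xs.
        Y_e (map (\<lambda>x. pr1 A B C x + pr2 A B C x) xs)
      + Y_G (map (\<lambda>x. pr1 A B C x + pr3 A B C x) xs)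
      - Y_e (map (pr1 A B C) xs))"
    using mem by (intro symmetric_on_diff_forms symmetric_on_add_forms
        symmetric_on_compose[OF e] symmetric_on_compose[OF g]) auto
  then show ?thesis by (simp add: Y_glue_eq[abs_def])
qed

lemma eta_glue_cong:
  fixes eta_e eta_G :: "'b \<Rightarrow> 'b \<Rightarrow> 'c::ab_group_add"
  assumes d: "direct3 scale A B C"
    and e: "\<forall>x\<in>set_plus A B. \<forall>y\<in>set_plus A B. eta_e' x y = eta_e x y"
    and g: "\<forall>x\<in>set_plus A C. \<forall>y\<in>set_plus A C. eta_G' x y = eta_G x y"
  shows "eta_glue A B C eta_e' eta_G' = eta_glue A B C eta_e eta_G"
  using e g direct3_set_plus_mem(1-4)[OF d] by (intro ext) (simp add: eta_glue_eq)

lemma Y_glue_cong: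
  fixes Y_e Y_G :: "'b list \<Rightarrow> 'c::ab_group_add"
  assumes d: "direct3 scale A B C"
    and e: "\<forall>xs. set xs \<subseteq> set_plus A B \<longrightarrow> Y_e' xs = Y_e xs"
    and g: "\<forall>xs. set xs \<subseteq> set_plus A C \<longrightarrow> Y_G' xs = Y_G xs"
  shows "Y_glue A B C Y_e' Y_G' = Y_glue A B C Y_e Y_G"
  using e g direct3_set_plus_mem(1-4)[OF d] by (intro ext) (simp add: Y_glue_eq image_subset_iff)

lemma multilinear_keep_summand:
  assumes ml: "multilinear_on scale UNIV Y"
    and split: "\<And>x. p x + q x = x"
    and kill: "\<And>ps x xs. u \<in> set ps \<Longrightarrow> Y (ps @ q x # xs) = 0"
    and u: "u \<in> set ps"
  shows "Y (ps @ xs) = Y (ps @ map p xs)"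
  using u
proof (induction xs arbitrary: ps)
  case Nil
  then show ?case by simp
next
  case (Cons x xs)
  have "Y (ps @ x # xs) = Y (ps @ p x # xs) + Y (ps @ q x # xs)"
    using multilinear_on_add[OF ml, of ps xs "p x" "q x"] split[of x] by simp
  also have "Y (ps @ q x # xs) = 0" using kill Cons.prems by blast
  also have "Y (ps @ p x # xs) = Y ((ps @ [p x]) @ map p xs)"
    using Cons.IH[of "ps @ [p x]"] Cons.prems by simp
  finally show ?case by simp
qed

lemma mixed_vanishing_drop_pr3:
  assumes d: "direct3 scale A B C" and ml: "multilinear_on scale UNIV Y"
    and mixed: "\<And>L b c. b \<in> B \<Longrightarrow> c \<in> C \<Longrightarrow> b \<in> set L \<Longrightarrow> c \<in> set L \<Longrightarrow> Y L = 0"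
    and b: "b \<in> B" "b \<in> set ps"
  shows "Y (ps @ xs) = Y (ps @ map (\<lambda>x. pr1 A B C x + pr2 A B C x) xs)"
proof (rule multilinear_keep_summand[OF ml, where q = "pr3 A B C"])
  show "pr1 A B C x + pr2 A B C x + pr3 A B C x = x" for x by (rule direct3_decomp(1)[OF d])
  show "Y (qs @ pr3 A B C x # ws) = 0" if "b \<in> set qs" for qs x ws
    using mixed[of b "pr3 A B C x"] direct3_decomp(4)[OF d] that b(1) by simp
qed (rule b(2))

lemma mixed_vanishing_drop_pr2:
  assumes d: "direct3 scale A B C" and ml: "multilinear_on scale UNIV Y"
    and mixed: "\<And>L b c. b \<in> B \<Longrightarrow> c \<in> C \<Longrightarrow> b \<in> set L \<Longrightarrow> c \<in> set L \<Longrightarrow> Y L = 0"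
    and c: "c \<in> C" "c \<in> set ps"
  shows "Y (ps @ xs) = Y (ps @ map (\<lambda>x. pr1 A B C x + pr3 A B C x) xs)"
proof (rule multilinear_keep_summand[OF ml, where q = "pr2 A B C"])
  show "pr1 A B C x + pr3 A B C x + pr2 A B C x = x" for x
    using direct3_decomp(1)[OF d, of x] by (simp add: algebra_simps)
  show "Y (qs @ pr2 A B C x # ws) = 0" if "c \<in> set qs" for qs x ws
    using mixed[of "pr2 A B C x" c] direct3_decomp(3)[OF d] that c(1) by simp
qed (rule c(2))

text \<open>Expanding every argument along \<open>A \<oplus> B \<oplus> C\<close>, all terms with both a \<open>B\<close>- and a
  \<open>C\<close>-entry vanish; what remains is the inclusion-exclusion of the restrictions to
  \<open>A \<oplus> B\<close>, \<open>A \<oplus> C\<close> and \<open>A\<close>.\<close>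
lemma multilinear_Y_glue_self:
  assumes d: "direct3 scale A B C" and ml: "multilinear_on scale UNIV Y"
    and mixed: "\<And>L b c. b \<in> B \<Longrightarrow> c \<in> C \<Longrightarrow> b \<in> set L \<Longrightarrow> c \<in> set L \<Longrightarrow> Y L = 0"
  shows "Y_glue A B C Y Y = Y"
proof
  let ?p1 = "pr1 A B C" and ?p2 = "pr2 A B C" and ?p3 = "pr3 A B C"
  let ?p12 = "\<lambda>x. ?p1 x + ?p2 x" and ?p13 = "\<lambda>x. ?p1 x + ?p3 x"
  note D = direct3_decomp[OF d]
  have add: "Y (zs @ (u + v) # ws) = Y (zs @ u # ws) + Y (zs @ v # ws)" for zs u v ws
    using multilinear_on_add[OF ml] by simp
  have drop3: "Y (qs @ ys) = Y (qs @ map ?p12 ys)" if "b \<in> B" "b \<in> set qs" for qs ys b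
    using d ml mixed that by (rule mixed_vanishing_drop_pr3)
  have drop2: "Y (qs @ ys) = Y (qs @ map ?p13 ys)" if "c \<in> C" "c \<in> set qs" for qs ys c
    using d ml mixed that by (rule mixed_vanishing_drop_pr2)
  have expand: "Y (ps @ xs) = Y (ps @ map ?p12 xs) + Y (ps @ map ?p13 xs) - Y (ps @ map ?p1 xs)"
    for ps xs
  proof (induction xs arbitrary: ps)
    case Nil
    then show ?case by simp
  next
    case (Cons x xs)
    have "Y (ps @ x # xs) = Y (ps @ (?p1 x + ?p2 x + ?p3 x) # xs)" by (simp only: D(1))
    also have "\<dots> = Y (ps @ ?p1 x # xs) + Y (ps @ ?p2 x # xs) + Y (ps @ ?p3 x # xs)"
      by (simp only: add)
    also have "Y (ps @ ?p1 x # xs) = Y ((ps @ [?p1 x]) @ map ?p12 xs)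
        + Y ((ps @ [?p1 x]) @ map ?p13 xs) - Y ((ps @ [?p1 x]) @ map ?p1 xs)"
      using Cons.IH[of "ps @ [?p1 x]"] by simp
    also have "Y (ps @ ?p2 x # xs) = Y ((ps @ [?p2 x]) @ map ?p12 xs)"
      using drop3[where qs = "ps @ [?p2 x]" and ys = xs and b = "?p2 x"] D(3) by simp
    also have "Y (ps @ ?p3 x # xs) = Y ((ps @ [?p3 x]) @ map ?p13 xs)"
      using drop2[where qs = "ps @ [?p3 x]" and ys = xs and c = "?p3 x"] D(4) by simp
    finally show ?case by (simp add: add)
  qed
  show "Y_glue A B C Y Y xs = Y xs" for xs
    using expand[of "[]" xs] unfolding Y_glue_eq append_Nil by (rule sym)
qed

lemma bilinear_orthogonal_diagonal:
  assumes d: "direct3 scale A B C" and bl: "bilinear_on scale UNIV eta"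
    and orth: "form_orthogonal eta A B" "form_orthogonal eta A C" "form_orthogonal eta B C"
  shows "eta x y = eta (pr1 A B C x) (pr1 A B C y) + eta (pr2 A B C x) (pr2 A B C y)
      + eta (pr3 A B C x) (pr3 A B C y)"
proof -
  let ?p1 = "pr1 A B C" and ?p2 = "pr2 A B C" and ?p3 = "pr3 A B C"
  note D = direct3_decomp[OF d]
  have "eta x y = eta (?p1 x + ?p2 x + ?p3 x) (?p1 y + ?p2 y + ?p3 y)" by (simp only: D(1))
  also have "\<dots> = eta (?p1 x) (?p1 y) + eta (?p2 x) (?p1 y) + eta (?p3 x) (?p1 y)
      + eta (?p1 x) (?p2 y) + eta (?p2 x) (?p2 y) + eta (?p3 x) (?p2 y)
      + eta (?p1 x) (?p3 y) + eta (?p2 x) (?p3 y) + eta (?p3 x) (?p3 y)"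
    using bilinear_on_add[OF bl] by (simp only: UNIV_I add.assoc)
  also have "\<dots> = eta (?p1 x) (?p1 y) + eta (?p2 x) (?p2 y) + eta (?p3 x) (?p3 y)"
    using form_orthogonalD[OF orth(1) D(2,3)] form_orthogonalD[OF orth(2) D(2,4)]
      form_orthogonalD[OF orth(3) D(3,4)]
    by simp
  finally show ?thesis .
qed

lemma orthogonal_eta_glue_self:
  assumes d: "direct3 scale A B C" and bl: "bilinear_on scale UNIV eta"
    and orth: "form_orthogonal eta A B" "form_orthogonal eta A C" "form_orthogonal eta B C"
  shows "eta_glue A B C eta eta = eta"
    and "hom2 (pr1 A B C) (eta_i A B C eta)"
    and "hom2 (pr2 A B C) (eta_v A B C eta)"
    and "hom2 (pr3 A B C) (eta_g A B C eta eta)"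
proof -
  let ?p1 = "pr1 A B C" and ?p2 = "pr2 A B C" and ?p3 = "pr3 A B C"
  note D = direct3_decomp[OF d] and P = direct3_pr_summand[OF d]
  have add: "eta (u + v) (u' + v') = eta u u' + eta u v' + eta v u' + eta v v'" for u v u' v'
    using bilinear_on_add[OF bl] by (simp add: algebra_simps)
  have i: "eta_i A B C eta x y = eta (?p1 x) (?p1 y)" for x y
    by (simp add: eta_i_def)
  have v: "eta_v A B C eta x y = eta (?p2 x) (?p2 y)" for x y
    using form_orthogonalD[OF orth(1) D(2,3)]
    unfolding eta_v_def i add by simp
  have g: "eta_g A B C eta eta x y = eta (?p3 x) (?p3 y)" for x y
    using form_orthogonalD[OF orth(2) D(2,4)]
    unfolding eta_g_def i add by simp
  show "eta_glue A B C eta eta = eta"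
  proof (intro ext)
    show "eta_glue A B C eta eta x y = eta x y" for x y
      unfolding eta_glue_def i v g by (rule bilinear_orthogonal_diagonal[OF d bl orth, symmetric])
  qed
  show "hom2 ?p1 (eta_i A B C eta)" "hom2 ?p2 (eta_v A B C eta)" "hom2 ?p3 (eta_g A B C eta eta)"
    unfolding hom2_def i v g using P D by simp_all
qed

lemma fin_dim_on_UNIV_sum:
  assumes "fin_dim_on scale V" "fin_dim_on scale W" "\<forall>x. \<exists>v\<in>V. \<exists>w\<in>W. x = v + w"
  shows "fin_dim_on scale UNIV"
proof -
  obtain BV BW where B: "finite BV" "span BV = V" "finite BW" "span BW = W"
    using assms(1,2) unfolding fin_dim_on_def by blast
  have "x \<in> span (BV \<union> BW)" for x
    using assms(3) unfolding span_Un B(2,4) by blast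
  then have "span (BV \<union> BW) = UNIV" by blast
  then show ?thesis unfolding fin_dim_on_def using B(1,3) by (intro exI[where x = "BV \<union> BW"]) simp
qed

lemma form_orthogonal_set_plus:
  assumes bl: "bilinear_on scale UNIV eta"
    and "form_orthogonal eta U W" "form_orthogonal eta U' W"
  shows "form_orthogonal eta (set_plus U U') W"
  unfolding form_orthogonal_def
proof (intro ballI)
  fix v w assume "v \<in> set_plus U U'" "w \<in> W"
  then obtain u u' where "u \<in> U" "u' \<in> U'" "v = u + u'" unfolding set_plus_def by blast
  with form_orthogonalD[OF assms(2) _ \<open>w \<in> W\<close>] form_orthogonalD[OF assms(3) _ \<open>w \<in> W\<close>]
  show "eta v w = 0 \<and> eta w v = 0" by (simp add: bilinear_on_add[OF bl])
qed

lemma nondegenerate_orthogonal_sum: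
  assumes bl: "bilinear_on scale UNIV eta" and orth: "form_orthogonal eta U W"
    and spans: "\<forall>x. \<exists>u\<in>U. \<exists>w\<in>W. x = u + w"
    and ndU: "\<forall>u\<in>U. (\<forall>y\<in>U. eta u y = 0) \<longrightarrow> u = 0"
    and ndW: "\<forall>w\<in>W. (\<forall>y\<in>W. eta w y = 0) \<longrightarrow> w = 0"
    and x: "\<forall>y. eta x y = 0"
  shows "x = 0"
proof -
  obtain u w where uw: "u \<in> U" "w \<in> W" "x = u + w" using spans by blast
  have "eta u y = 0" if "y \<in> U" for y
    using x[rule_format, of y] form_orthogonalD[OF orth that uw(2)] uw(3)
    by (simp add: bilinear_on_add[OF bl])
  moreover have "eta w y = 0" if "y \<in> W" for y
    using x[rule_format, of y] form_orthogonalD[OF orth uw(1) that] uw(3)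
    by (simp add: bilinear_on_add[OF bl])
  ultimately have "u = 0" "w = 0" using ndU ndW uw(1,2) by blast+
  then show "x = 0" using uw(3) by simp
qed

lemma nondegenerate_orthogonal_summand:
  assumes bl: "bilinear_on scale UNIV eta" and orth: "form_orthogonal eta U W"
    and spans: "\<forall>v\<in>V. \<exists>u\<in>U. \<exists>w\<in>W. v = u + w" and WV: "W \<subseteq> V"
    and ndV: "\<forall>v\<in>V. (\<forall>y\<in>V. eta v y = 0) \<longrightarrow> v = 0"
  shows "\<forall>w\<in>W. (\<forall>y\<in>W. eta w y = 0) \<longrightarrow> w = 0"
proof (intro ballI impI)
  fix w assume w: "w \<in> W" and wW: "\<forall>y\<in>W. eta w y = 0"
  have "eta w v = 0" if vV: "v \<in> V" for v
  proof -
    obtain u w' where uw: "u \<in> U" "w' \<in> W" "v = u + w'" using spans vV by blast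
    have "eta w u = 0" using form_orthogonalD[OF orth uw(1) w] by simp
    moreover have "eta w w' = 0" using wW uw(2) by blast
    ultimately show ?thesis using uw(3) by (simp add: bilinear_on_add[OF bl])
  qed
  then show "w = 0" using ndV w WV by blast
qed

section \<open>Braided potentials\<close>

context
  fixes He Hg :: "'b set" and rho :: "'b \<Rightarrow> 'b" and Y :: "'b list \<Rightarrow> 'a"
  assumes ml: "multilinear_on scale UNIV Y"
    and braid: "braid_invariant He Hg rho Y"
    and spans: "\<forall>x. \<exists>a\<in>He. \<exists>b\<in>Hg. x = a + b"
    and rho_Hg: "\<forall>x\<in>Hg. rho x = x"
begin

lemma braid_commute_Hg:
  assumes x: "x \<in> Hg"
  shows "Y (zs @ y # x # ws) = Y (zs @ x # y # ws)"
proof -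
  obtain a b where ab: "a \<in> He" "b \<in> Hg" "y = a + b" using spans by blast
  have "Y (zs @ y # x # ws) = Y (zs @ a # x # ws) + Y (zs @ b # x # ws)"
    unfolding ab(3) using multilinear_on_add[OF ml] by simp
  also have "Y (zs @ a # x # ws) = Y (zs @ x # a # ws)"
    using braid ab(1) unfolding braid_invariant_def by blast
  also have "Y (zs @ b # x # ws) = Y (zs @ x # b # ws)"
    using braid ab(2) rho_Hg x unfolding braid_invariant_def by metis
  also have "Y (zs @ x # a # ws) + Y (zs @ x # b # ws) = Y ((zs @ [x]) @ (a + b) # ws)"
    using multilinear_on_add[OF ml, of "zs @ [x]" ws a b] by simp
  finally show ?thesis using ab(3) by simp
qed

lemma braid_move_front_Hg:
  assumes x: "x \<in> Hg"
  shows "Y (zs @ x # ws) = Y (x # zs @ ws)"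
proof (induction zs arbitrary: ws rule: rev_induct)
  case Nil
  then show ?case by simp
next
  case (snoc z zs)
  have "Y ((zs @ [z]) @ x # ws) = Y (zs @ z # x # ws)" by simp
  also have "\<dots> = Y (zs @ x # z # ws)" by (rule braid_commute_Hg[OF x])
  also have "\<dots> = Y (x # zs @ z # ws)" by (rule snoc.IH)
  finally show ?case by simp
qed

lemma braid_twist_Hg:
  assumes x: "x \<in> Hg"
  shows "Y (x # zs @ y # ws) = Y (x # zs @ rho y # ws)"
proof -
  have "Y (x # zs @ y # ws) = Y (zs @ x # y # ws)" by (rule braid_move_front_Hg[OF x, symmetric])
  also have "\<dots> = Y (zs @ rho y # x # ws)" using braid x unfolding braid_invariant_def by blast
  also have "\<dots> = Y ((zs @ [rho y]) @ x # ws)" by simp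
  also have "\<dots> = Y (x # (zs @ [rho y]) @ ws)" by (rule braid_move_front_Hg[OF x])
  also have "\<dots> = Y (x # zs @ rho y # ws)" by simp
  finally show ?thesis .
qed

end

end

section \<open>Structure of pre-\<open>\<int>/2\<int>\<close>-Frobenius manifolds\<close>

locale vector_space_char_0 = vector_space scale
  for scale :: "'a::field_char_0 \<Rightarrow> 'b::ab_group_add \<Rightarrow> 'b" (infixr \<open>*s\<close> 75)
begin

lemma double_eq_0_iff: "(x::'b) + x = 0 \<longleftrightarrow> x = 0"
proof
  assume "x + x = 0"
  then have "2 *s x = 0" by (metis one_add_one scale_left_distrib scale_one)
  then show "x = 0" by simp
qed simp

text \<open>Move \<open>c\<close> to the front; braiding it past \<open>b\<close> then replaces \<open>b\<close> by \<open>rho b = - b\<close>,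
  so \<open>Y L = - Y L\<close>.\<close>
lemma braid_mixed_vanish:
  assumes ml: "multilinear_on scale UNIV Y" and braid: "braid_invariant He Hg rho Y"
    and spans: "\<forall>x. \<exists>a\<in>He. \<exists>b\<in>Hg. x = a + b" and rho_Hg: "\<forall>x\<in>Hg. rho x = x"
    and disj: "He \<inter> Hg = {0}"
    and c: "c \<in> Hg" "c \<in> set L" and b: "b \<in> He" "rho b = - b" "b \<in> set L"
  shows "Y L = 0"
proof (cases "b = c")
  case True
  with b(1) c(1) disj have "b = 0" by blast
  with b(3) obtain p q where "L = p @ 0 # q" by (metis split_list)
  then show ?thesis using multilinear_on_zero[OF ml] by simp
next
  case False
  obtain p q where L: "L = p @ c # q" using c(2) by (metis split_list)
  with b(3) False have "b \<in> set (p @ q)" by auto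
  then obtain r s where rs: "p @ q = r @ b # s" by (metis split_list)
  note twist = braid_twist_Hg[OF ml braid spans rho_Hg c(1)]
  have "Y L = Y (c # r @ b # s)"
    unfolding L using braid_move_front_Hg[OF ml braid spans rho_Hg c(1), of p q] rs by simp
  also have "\<dots> = Y (c # r @ rho b # s)" by (rule twist)
  also have "\<dots> = - Y (c # r @ b # s)"
    using multilinear_on_UNIV_neg[OF ml, of "c # r"] b(2) by simp
  finally have "Y (c # r @ b # s) = - Y (c # r @ b # s)" using \<open>Y L = Y (c # r @ b # s)\<close> by simp
  then show ?thesis using \<open>Y L = Y (c # r @ b # s)\<close> by simp
qed

lemma involution_eigen_split:
  assumes lin: "Vector_Spaces.linear scale scale rho" and inv: "\<forall>x. rho (rho x) = x"
  shows "rho ((1/2) *s (x + rho x)) = (1/2) *s (x + rho x)"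
    and "rho ((1/2) *s (x - rho x)) = - ((1/2) *s (x - rho x))"
    and "(1/2) *s (x + rho x) + (1/2) *s (x - rho x) = x"
proof -
  note L = linear_endo_simps[OF lin]
  show "rho ((1/2) *s (x + rho x)) = (1/2) *s (x + rho x)"
    using inv by (simp add: L add.commute)
  show "rho ((1/2) *s (x - rho x)) = - ((1/2) *s (x - rho x))"
    using inv by (simp add: L scale_right_diff_distrib)
  have "(1/2) *s (x + rho x) + (1/2) *s (x - rho x) = (1/2) *s (x + x)"
    by (simp add: scale_right_distrib[symmetric])
  also have "x + x = 2 *s x" by (metis one_add_one scale_left_distrib scale_one)
  finally show "(1/2) *s (x + rho x) + (1/2) *s (x - rho x) = x" by simp
qed

lemma involution_eigenspaces:
  assumes lin: "Vector_Spaces.linear scale scale rho" and inv: "\<forall>x. rho (rho x) = x"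
    and W: "subspace W" and rW: "rho ` W \<subseteq> W"
  shows "subspace (W \<inter> fixed_space rho)" and "subspace {x \<in> W. rho x = - x}"
    and "W = set_plus (W \<inter> fixed_space rho) {x \<in> W. rho x = - x}"
proof -
  note L = linear_endo_simps[OF lin]
  show "subspace (W \<inter> fixed_space rho)"
    using W unfolding fixed_space_def subspace_def by (simp add: L)
  show "subspace {x \<in> W. rho x = - x}"
    using W unfolding subspace_def by (simp add: L)
  have "x \<in> set_plus (W \<inter> fixed_space rho) {x \<in> W. rho x = - x}" if x: "x \<in> W" for x
  proof -
    have "rho x \<in> W" using rW x by blast
    then have "x + rho x \<in> W" "x - rho x \<in> W" using W x by (simp_all add: subspace_add subspace_diff)
    then have "(1/2) *s (x + rho x) \<in> W \<inter> fixed_space rho" "(1/2) *s (x - rho x) \<in> {x \<in> W. rho x = - x}"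
      using involution_eigen_split(1,2)[OF lin inv] W unfolding fixed_space_def
      by (simp_all add: subspace_scale)
    with involution_eigen_split(3)[OF lin inv, of x] show ?thesis unfolding set_plus_def by force
  qed
  moreover have "set_plus (W \<inter> fixed_space rho) {x \<in> W. rho x = - x} \<subseteq> W"
    using W unfolding set_plus_def by (auto intro: subspace_add)
  ultimately show "W = set_plus (W \<inter> fixed_space rho) {x \<in> W. rho x = - x}" by blast
qed

lemma involution_eigen_sum_zero:
  assumes lin: "Vector_Spaces.linear scale scale rho"
    and "rho a = a" "rho b = - b" "a + b = 0"
  shows "a = 0 \<and> b = 0"
proof -
  have "a - b = 0" using assms linear_endo_simps(1)[OF lin, of a b] linear_endo_simps(3)[OF lin] by simp
  then have "a = b" by simp
  then show ?thesis using assms(4) double_eq_0_iff by simp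
qed

lemma pre_Z2_frobenius_eigen_direct3:
  assumes P: "pre_Z2_frobenius scale He Hg rho eta Y"
  defines "A \<equiv> He \<inter> fixed_space rho" and "B \<equiv> {x \<in> He. rho x = - x}"
  shows "direct3 scale A B Hg" and "He = set_plus A B"
proof -
  have sE: "subspace He" and sG: "subspace Hg" and disj: "He \<inter> Hg = {0}"
    and spans: "\<forall>x. \<exists>e\<in>He. \<exists>g\<in>Hg. x = e + g" and lin: "Vector_Spaces.linear scale scale rho"
    and inv: "\<forall>x. rho (rho x) = x" and rE: "rho ` He \<subseteq> He"
    using P unfolding pre_Z2_frobenius_def by simp_all
  note eig = involution_eigenspaces[OF lin inv sE rE, folded A_def B_def]
  show "He = set_plus A B" by (rule eig(3))
  have zero: "a = 0 \<and> b = 0 \<and> c = 0"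
    if abc: "a \<in> A" "b \<in> B" "c \<in> Hg" "a + b + c = 0" for a b c
  proof -
    have "a + b \<in> He" using abc eig(3) unfolding set_plus_def by blast
    then have "- (a + b) \<in> He" by (rule subspace_neg[OF sE])
    moreover have "c = - (a + b)" using abc(4) by (simp only: add_eq_0_iff)
    ultimately have "c \<in> He" by simp
    with disj abc(3) have "c = 0" by blast
    with abc involution_eigen_sum_zero[OF lin, of a b] show ?thesis
      unfolding A_def B_def fixed_space_def by simp
  qed
  show "direct3 scale A B Hg"
    unfolding direct3_def
  proof (intro conjI eig(1,2) sG)
    show "\<forall>a b c. a \<in> A \<longrightarrow> b \<in> B \<longrightarrow> c \<in> Hg \<longrightarrow> a + b + c = 0 \<longrightarrow> a = 0 \<and> b = 0 \<and> c = 0"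
      using zero by blast
    show "\<forall>x. \<exists>a\<in>A. \<exists>b\<in>B. \<exists>c\<in>Hg. x = a + b + c"
    proof
      fix x
      obtain e g where "e \<in> He" "g \<in> Hg" "x = e + g" using spans by blast
      with eig(3) show "\<exists>a\<in>A. \<exists>b\<in>B. \<exists>c\<in>Hg. x = a + b + c" unfolding set_plus_def by blast
    qed
  qed
qed

lemma pre_Z2_frobenius_fixed_space:
  assumes P: "pre_Z2_frobenius scale He Hg rho eta Y"
  shows "fixed_space rho = set_plus (He \<inter> fixed_space rho) Hg"
proof
  have spans: "\<forall>x. \<exists>e\<in>He. \<exists>g\<in>Hg. x = e + g" and lin: "Vector_Spaces.linear scale scale rho"
    and rG: "\<forall>x\<in>Hg. rho x = x"
    using P unfolding pre_Z2_frobenius_def by simp_all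
  note L = linear_endo_simps[OF lin]
  show "fixed_space rho \<subseteq> set_plus (He \<inter> fixed_space rho) Hg"
  proof
    fix x assume x: "x \<in> fixed_space rho"
    obtain e g where eg: "e \<in> He" "g \<in> Hg" "x = e + g" using spans by blast
    then have "rho e + g = e + g" using x rG L unfolding fixed_space_def by simp
    then have "e \<in> He \<inter> fixed_space rho" using eg(1) unfolding fixed_space_def by simp
    then show "x \<in> set_plus (He \<inter> fixed_space rho) Hg" unfolding set_plus_def using eg by blast
  qed
  show "set_plus (He \<inter> fixed_space rho) Hg \<subseteq> fixed_space rho"
    using rG L unfolding set_plus_def fixed_space_def by auto
qed

lemma pre_Z2_frobenius_orthogonal:
  assumes P: "pre_Z2_frobenius scale He Hg rho eta Y"
  defines "A \<equiv> He \<inter> fixed_space rho" and "B \<equiv> {x \<in> He. rho x = - x}"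
  shows "form_orthogonal eta A B" "form_orthogonal eta A Hg" "form_orthogonal eta B Hg"
proof -
  have bl: "bilinear_on scale UNIV eta" and sym: "\<forall>x y. eta x y = eta y x"
    and inv: "\<forall>x y. eta (rho x) (rho y) = eta x y" and orth: "\<forall>x\<in>He. \<forall>y\<in>Hg. eta x y = 0"
    using P unfolding pre_Z2_frobenius_def by simp_all
  have "eta a b = 0" if "a \<in> A" "b \<in> B" for a b
  proof -
    have "eta a b = eta (rho a) (rho b)" using inv by simp
    also have "\<dots> = - eta a b"
      using that bilinear_on_UNIV_neg[OF bl] unfolding A_def B_def fixed_space_def by simp
    finally show ?thesis by simp
  qed
  moreover have "A \<subseteq> He" "B \<subseteq> He" unfolding A_def B_def by auto
  ultimately show "form_orthogonal eta A B" "form_orthogonal eta A Hg" "form_orthogonal eta B Hg"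
    using orth sym unfolding form_orthogonal_def by (metis subsetD)+
qed

lemma pre_Z2_frobenius_structure:
  assumes P: "pre_Z2_frobenius scale He Hg rho eta Y"
  defines "A \<equiv> He \<inter> fixed_space rho" and "B \<equiv> {x \<in> He. rho x = - x}"
  shows "direct3 scale A B Hg" and "He = set_plus A B" and "fixed_space rho = set_plus A Hg"
    and "G_degree_e He Hg (Y_glue A B Hg Y Y)"
    and "hom2 (pr1 A B Hg) (eta_i A B Hg eta)"
    and "hom2 (pr2 A B Hg) (eta_v A B Hg eta)"
    and "hom2 (pr3 A B Hg) (eta_g A B Hg eta eta)"
    and "eta = eta_glue A B Hg eta eta" and "Y = Y_glue A B Hg Y Y"
proof -
  note dir = pre_Z2_frobenius_eigen_direct3[OF P, folded A_def B_def]
    pre_Z2_frobenius_fixed_space[OF P, folded A_def]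
  note orth = pre_Z2_frobenius_orthogonal[OF P, folded A_def B_def]
  have ml: "multilinear_on scale UNIV Y" and braid: "braid_invariant He Hg rho Y"
    and spans: "\<forall>x. \<exists>a\<in>He. \<exists>b\<in>Hg. x = a + b" and rG: "\<forall>x\<in>Hg. rho x = x"
    and disj: "He \<inter> Hg = {0}" and deg: "G_degree_e He Hg Y"
    and bl: "bilinear_on scale UNIV eta"
    using P unfolding pre_Z2_frobenius_def by simp_all
  have Y: "Y_glue A B Hg Y Y = Y"
    using dir(1) ml
  proof (rule multilinear_Y_glue_self)
    show "Y L = 0" if "b \<in> B" "c \<in> Hg" "b \<in> set L" "c \<in> set L" for L b c
      using braid_mixed_vanish[OF ml braid spans rG disj] that unfolding B_def by blast
  qed
  note eta = orthogonal_eta_glue_self[OF dir(1) bl orth]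
  show "direct3 scale A B Hg" "He = set_plus A B" "fixed_space rho = set_plus A Hg" by (fact dir)+
  show "G_degree_e He Hg (Y_glue A B Hg Y Y)" using deg by (simp only: Y)
  show "hom2 (pr1 A B Hg) (eta_i A B Hg eta)" "hom2 (pr2 A B Hg) (eta_v A B Hg eta)"
    "hom2 (pr3 A B Hg) (eta_g A B Hg eta eta)" by (fact eta(2-4))+
  show "eta = eta_glue A B Hg eta eta" by (rule eta(1)[symmetric])
  show "Y = Y_glue A B Hg Y Y" by (rule Y[symmetric])
qed

lemma pre_Z2_frobenius_unique:
  assumes P: "pre_Z2_frobenius scale He Hg rho eta Y"
    and P': "pre_Z2_frobenius scale He Hg rho eta' Y'"
    and eta_He: "\<forall>x\<in>He. \<forall>y\<in>He. eta x y = eta' x y"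
    and eta_fixed: "\<forall>x\<in>fixed_space rho. \<forall>y\<in>fixed_space rho. eta x y = eta' x y"
    and Y_He: "\<forall>xs. set xs \<subseteq> He \<longrightarrow> Y xs = Y' xs"
    and Y_fixed: "\<forall>xs. set xs \<subseteq> fixed_space rho \<longrightarrow> Y xs = Y' xs"
  shows "eta = eta'" and "Y = Y'"
proof -
  note S = pre_Z2_frobenius_structure[OF P] and S' = pre_Z2_frobenius_structure[OF P']
  have "eta = eta_glue (He \<inter> fixed_space rho) {x \<in> He. rho x = - x} Hg eta eta"
    by (rule S(8))
  also have "\<dots> = eta_glue (He \<inter> fixed_space rho) {x \<in> He. rho x = - x} Hg eta' eta'"
    using eta_He eta_fixed
    by (intro eta_glue_cong[OF S(1)]) (simp_all flip: S(2,3))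
  also have "\<dots> = eta'" by (rule S'(8)[symmetric])
  finally show "eta = eta'" .
  have "Y = Y_glue (He \<inter> fixed_space rho) {x \<in> He. rho x = - x} Hg Y Y"
    by (rule S(9))
  also have "\<dots> = Y_glue (He \<inter> fixed_space rho) {x \<in> He. rho x = - x} Hg Y' Y'"
    using Y_He Y_fixed
    by (intro Y_glue_cong[OF S(1)]) (simp_all flip: S(2,3))
  also have "\<dots> = Y'" by (rule S'(9)[symmetric])
  finally show "Y = Y'" .
qed

end

section \<open>Gluing two Frobenius manifolds\<close>

text \<open>The theorem also assumes \<open>hom2 (pr1 Hi Hv Hg) (eta_i Hi Hv Hg eta_e)\<close>.\<close>

locale Z2_gluing = vector_space_char_0 +
  fixes Hi Hv Hg :: "'b set" and rho :: "'b \<Rightarrow> 'b"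
    and eta_e eta_G :: "'b \<Rightarrow> 'b \<Rightarrow> 'a" and Y_e Y_G :: "'b list \<Rightarrow> 'a"
  assumes direct: "direct3 scale Hi Hv Hg"
    and rho_linear: "Vector_Spaces.linear scale scale rho"
    and rho_Hi: "\<forall>a\<in>Hi. rho a = a" and rho_Hv: "\<forall>b\<in>Hv. rho b = - b" and rho_Hg: "\<forall>c\<in>Hg. rho c = c"
    and frob_e: "formal_frobenius scale (set_plus Hi Hv) eta_e Y_e"
    and frob_G: "formal_frobenius scale (set_plus Hi Hg) eta_G Y_G"
    and eta_agree: "\<forall>x\<in>Hi. \<forall>y\<in>Hi. eta_e x y = eta_G x y"
    and Y_agree: "\<forall>xs. set xs \<subseteq> Hi \<longrightarrow> Y_e xs = Y_G xs"
    and degree: "G_degree_e (set_plus Hi Hv) Hg (Y_glue Hi Hv Hg Y_e Y_G)"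
    and hom_v: "hom2 (pr2 Hi Hv Hg) (eta_v Hi Hv Hg eta_e)"
    and hom_g: "hom2 (pr3 Hi Hv Hg) (eta_g Hi Hv Hg eta_e eta_G)"
begin

abbreviation "He \<equiv> set_plus Hi Hv"
abbreviation "HG \<equiv> set_plus Hi Hg"
abbreviation "p1 \<equiv> pr1 Hi Hv Hg"
abbreviation "p2 \<equiv> pr2 Hi Hv Hg"
abbreviation "p3 \<equiv> pr3 Hi Hv Hg"
abbreviation "glued_eta \<equiv> eta_glue Hi Hv Hg eta_e eta_G"
abbreviation "glued_Y \<equiv> Y_glue Hi Hv Hg Y_e Y_G"

lemmas decomp = direct3_decomp[OF direct]
  and pr_summand = direct3_pr_summand[OF direct]
  and pr_mem = direct3_set_plus_mem[OF direct]
  and pr_on = direct3_pr_on_set_plus[OF direct]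
  and frob_eD = formal_frobeniusD[OF frob_e]
  and frob_GD = formal_frobeniusD[OF frob_G]

lemma zero_mem: "0 \<in> Hi" "0 \<in> He" "0 \<in> HG" "p1 0 = 0" "p2 0 = 0" "p3 0 = 0"
  using direct3D(4)[OF direct] pr_mem(5,7) pr_summand(1) by blast+

lemma glued_eta_He: "x \<in> He \<Longrightarrow> y \<in> He \<Longrightarrow> glued_eta x y = eta_e x y"
  using pr_on(1)[of x] pr_on(1)[of y] eta_agree decomp(2) by (simp add: eta_glue_eq)

lemma glued_eta_HG: "x \<in> HG \<Longrightarrow> y \<in> HG \<Longrightarrow> glued_eta x y = eta_G x y"
  using pr_on(2)[of x] pr_on(2)[of y] by (simp add: eta_glue_eq)

lemma glued_Y_He:
  assumes xs: "set xs \<subseteq> He"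
  shows "glued_Y xs = Y_e xs"
proof -
  have m: "map (\<lambda>x. p1 x + p2 x) xs = xs" "map (\<lambda>x. p1 x + p3 x) xs = map p1 xs"
    using xs pr_on(1) by (auto intro!: map_idI)
  have "set (map p1 xs) \<subseteq> Hi" using decomp(2) by auto
  then have "Y_G (map p1 xs) = Y_e (map p1 xs)" using Y_agree by simp
  then show ?thesis unfolding Y_glue_eq m by simp
qed

lemma glued_Y_HG:
  assumes xs: "set xs \<subseteq> HG"
  shows "glued_Y xs = Y_G xs"
proof -
  have m: "map (\<lambda>x. p1 x + p3 x) xs = xs" "map (\<lambda>x. p1 x + p2 x) xs = map p1 xs"
    using xs pr_on(2) by (auto intro!: map_idI)
  show ?thesis unfolding Y_glue_eq m by simp
qed

lemma glued_formal_frobenius: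
  "formal_frobenius scale He glued_eta glued_Y" "formal_frobenius scale HG glued_eta glued_Y"
  using formal_frobenius_cong[OF frob_e] formal_frobenius_cong[OF frob_G]
    glued_eta_He glued_eta_HG glued_Y_He glued_Y_HG
  by simp_all

lemma glued_Y_with_Hg:
  assumes c: "c \<in> Hg" "c \<in> set L"
  shows "glued_Y L = Y_G (map (\<lambda>x. p1 x + p3 x) L)"
proof -
  obtain p q where L: "L = p @ c # q" using c(2) by (metis split_list)
  have pc: "p1 c = 0" "p2 c = 0" using pr_summand(3)[OF c(1)] by simp_all
  have "set (map (\<lambda>x. p1 x + p2 x) zs) \<subseteq> He" "set (map p1 zs) \<subseteq> He" for zs
    using pr_mem(1,2) by auto
  then have "Y_e (map (\<lambda>x. p1 x + p2 x) L) = 0" "Y_e (map p1 L) = 0"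
    unfolding L using multilinear_on_zero[OF frob_eD(7)] zero_mem(2) pc by simp_all
  then show ?thesis by (simp add: Y_glue_eq)
qed

lemma rho_decomp: "rho x = p1 x + - p2 x + p3 x"
proof -
  note L = linear_endo_simps[OF rho_linear]
  have "rho x = rho (p1 x + p2 x + p3 x)" by (simp only: decomp(1))
  also have "\<dots> = p1 x + - p2 x + p3 x" using decomp(2-4) rho_Hi rho_Hv rho_Hg by (simp add: L)
  finally show ?thesis .
qed

lemma pr_rho: "p1 (rho x) = p1 x" "p2 (rho x) = - p2 x" "p3 (rho x) = p3 x"
  using direct3_pr_eq[OF direct rho_decomp decomp(2) _ decomp(4)]
    subspace_neg[OF direct3D(2)[OF direct] decomp(3)]
  by simp_all

lemma rho_involution: "rho (rho x) = x"
  using rho_decomp[of "rho x"] pr_rho decomp(1)[of x] by simp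

lemma fixed_space_rho: "fixed_space rho = HG"
proof
  show "fixed_space rho \<subseteq> HG"
  proof
    fix x assume "x \<in> fixed_space rho"
    then have "p1 x + - p2 x + p3 x = p1 x + p2 x + p3 x"
      using rho_decomp[of x] decomp(1)[of x] unfolding fixed_space_def by simp
    then have "p2 x + p2 x = 0" by (simp add: algebra_simps)
    then have "p2 x = 0" by (simp add: double_eq_0_iff)
    then show "x \<in> HG" using pr_mem(4)[of x] decomp(1)[of x] by simp
  qed
  show "HG \<subseteq> fixed_space rho"
    using rho_decomp pr_on(2) unfolding fixed_space_def by (auto simp: add.commute)
qed

lemma glued_eta_bilinear: "bilinear_on scale UNIV glued_eta"
  by (rule bilinear_on_eta_glue[OF direct frob_eD(3) frob_GD(3)])

lemma glued_eta_sym: "glued_eta x y = glued_eta y x"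
proof -
  have "eta_e (p1 x + p2 x) (p1 y + p2 y) = eta_e (p1 y + p2 y) (p1 x + p2 x)"
    "eta_e (p1 x) (p1 y) = eta_e (p1 y) (p1 x)"
    using frob_eD(4) pr_mem(1,2) by blast+
  moreover have "eta_G (p1 x + p3 x) (p1 y + p3 y) = eta_G (p1 y + p3 y) (p1 x + p3 x)"
    using frob_GD(4) pr_mem(4) by blast
  ultimately show ?thesis unfolding eta_glue_eq by simp
qed

lemma eta_e_zero: "w \<in> He \<Longrightarrow> eta_e 0 w = 0 \<and> eta_e w 0 = 0"
  using bilinear_on_zero[OF frob_eD(3)] zero_mem(2) by blast

lemma eta_G_zero: "w \<in> HG \<Longrightarrow> eta_G 0 w = 0"
  using bilinear_on_zero[OF frob_GD(3)] zero_mem(3) by blast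

text \<open>The orthogonality of the summands is exactly what the \<open>hom2\<close> hypotheses express.\<close>
lemma glued_eta_Hi_Hv: "a \<in> Hi \<Longrightarrow> b \<in> Hv \<Longrightarrow> glued_eta a b = 0"
proof -
  assume ab: "a \<in> Hi" "b \<in> Hv"
  then have "a \<in> He" "b \<in> He" using pr_mem(5,6) by blast+
  then have "glued_eta a b = eta_v Hi Hv Hg eta_e a b"
    using ab pr_summand(1,2) eta_e_zero by (simp add: glued_eta_He eta_v_def eta_i_def)
  also have "\<dots> = eta_v Hi Hv Hg eta_e (p2 a) (p2 b)" using hom_v unfolding hom2_def by blast
  also have "\<dots> = 0"
    using ab \<open>b \<in> He\<close> pr_summand(1,2) zero_mem eta_e_zero by (simp add: eta_v_def eta_i_def)
  finally show ?thesis .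
qed

lemma glued_eta_Hi_Hg: "a \<in> Hi \<Longrightarrow> c \<in> Hg \<Longrightarrow> glued_eta a c = 0"
proof -
  assume ac: "a \<in> Hi" "c \<in> Hg"
  then have "a \<in> HG" "c \<in> HG" "a \<in> He" using pr_mem(5,7,8) by blast+
  then have "glued_eta a c = eta_g Hi Hv Hg eta_e eta_G a c"
    using ac pr_summand(1,3) eta_e_zero by (simp add: glued_eta_HG eta_g_def eta_i_def)
  also have "\<dots> = eta_g Hi Hv Hg eta_e eta_G (p3 a) (p3 c)" using hom_g unfolding hom2_def by blast
  also have "\<dots> = 0"
    using ac \<open>c \<in> HG\<close> pr_summand(1,3) zero_mem eta_e_zero eta_G_zero
    by (simp add: eta_g_def eta_i_def)
  finally show ?thesis .
qed

lemma glued_eta_Hv_Hg: "b \<in> Hv \<Longrightarrow> c \<in> Hg \<Longrightarrow> glued_eta b c = 0"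
proof -
  assume bc: "b \<in> Hv" "c \<in> Hg"
  then have "b \<in> He" "c \<in> HG" using pr_mem(6,8) by blast+
  then show ?thesis using bc pr_summand(2,3) zero_mem eta_e_zero eta_G_zero by (simp add: eta_glue_eq)
qed

lemma glued_eta_orthogonal:
  "form_orthogonal glued_eta Hi Hv" "form_orthogonal glued_eta Hi Hg" "form_orthogonal glued_eta Hv Hg"
  unfolding form_orthogonal_def
  using glued_eta_Hi_Hv glued_eta_Hi_Hg glued_eta_Hv_Hg glued_eta_sym by metis+

lemma glued_eta_He_Hg_orthogonal: "form_orthogonal glued_eta He Hg"
  by (rule form_orthogonal_set_plus[OF glued_eta_bilinear glued_eta_orthogonal(2,3)])

lemma He_Hg_spans: "\<forall>x. \<exists>a\<in>He. \<exists>c\<in>Hg. x = a + c"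
proof
  fix x
  have "x = (p1 x + p2 x) + p3 x" using decomp(1)[of x] by simp
  then show "\<exists>a\<in>He. \<exists>c\<in>Hg. x = a + c" using pr_mem(2)[of x] decomp(4)[of x] by blast
qed

lemma glued_eta_nondegenerate:
  assumes "\<forall>y. glued_eta x y = 0"
  shows "x = 0"
proof (rule nondegenerate_orthogonal_sum[OF glued_eta_bilinear glued_eta_He_Hg_orthogonal He_Hg_spans])
  show "\<forall>u\<in>He. (\<forall>y\<in>He. glued_eta u y = 0) \<longrightarrow> u = 0"
    using frob_eD(5) glued_eta_He by simp
  have nd: "\<forall>v\<in>HG. (\<forall>y\<in>HG. glued_eta v y = 0) \<longrightarrow> v = 0"
    using frob_GD(5) glued_eta_HG by simp
  have spans: "\<forall>v\<in>HG. \<exists>a\<in>Hi. \<exists>c\<in>Hg. v = a + c" unfolding set_plus_def by blast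
  show "\<forall>c\<in>Hg. (\<forall>y\<in>Hg. glued_eta c y = 0) \<longrightarrow> c = 0"
    by (rule nondegenerate_orthogonal_summand[OF glued_eta_bilinear glued_eta_orthogonal(2)
          spans pr_mem(8) nd])
qed (rule assms)

lemma glued_eta_rho: "glued_eta (rho x) (rho y) = glued_eta x y"
  using bilinear_orthogonal_diagonal[OF direct glued_eta_bilinear glued_eta_orthogonal, of "rho x" "rho y"]
    bilinear_orthogonal_diagonal[OF direct glued_eta_bilinear glued_eta_orthogonal, of x y]
    bilinear_on_UNIV_neg[OF glued_eta_bilinear]
  by (simp add: pr_rho)

lemma glued_Y_short: "length xs < 3 \<Longrightarrow> glued_Y xs = 0"
  using frob_eD(6) frob_GD(6) pr_mem(1,2,4) by (simp add: Y_glue_eq image_subset_iff)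

lemma glued_Y_braid: "braid_invariant He Hg rho glued_Y"
  unfolding braid_invariant_def
proof (intro allI conjI impI)
  have sym: "symmetric_on UNIV glued_Y"
    by (rule symmetric_on_Y_glue[OF direct frob_eD(8) frob_GD(8)])
  then show "glued_Y (xs @ x # y # ys) = glued_Y (xs @ y # x # ys)" for xs ys x y
    unfolding symmetric_on_def by blast
  fix xs ys x y assume x: "x \<in> Hg"
  have "glued_Y (xs @ x # y # ys) = glued_Y (xs @ y # x # ys)"
    using sym unfolding symmetric_on_def by blast
  also have "\<dots> = Y_G (map (\<lambda>x. p1 x + p3 x) (xs @ y # x # ys))"
    using glued_Y_with_Hg[OF x] by simp
  also have "\<dots> = Y_G (map (\<lambda>x. p1 x + p3 x) (xs @ rho y # x # ys))"
    by (simp add: pr_rho)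
  also have "\<dots> = glued_Y (xs @ rho y # x # ys)"
    using glued_Y_with_Hg[OF x] by simp
  finally show "glued_Y (xs @ x # y # ys) = glued_Y (xs @ rho y # x # ys)" .
qed

lemma glued_pre_Z2_frobenius: "pre_Z2_frobenius scale He Hg rho glued_eta glued_Y"
proof -
  have "\<forall>x. \<exists>v\<in>He. \<exists>w\<in>HG. x = v + w" using He_Hg_spans pr_mem(8) by blast
  then have fin: "fin_dim_on scale UNIV" by (rule fin_dim_on_UNIV_sum[OF frob_eD(2) frob_GD(2)])
  have disj: "He \<inter> Hg = {0}"
  proof
    show "He \<inter> Hg \<subseteq> {0}" using pr_on(1) pr_summand(3) by fastforce
    show "{0} \<subseteq> He \<inter> Hg" using pr_mem(5,8) direct3D(4,6)[OF direct] by blast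
  qed
  have rho_He: "rho ` He \<subseteq> He"
  proof
    fix y assume "y \<in> rho ` He"
    then obtain x where x: "x \<in> He" "y = rho x" by blast
    then have "y = p1 x + - p2 x" using rho_decomp[of x] pr_on(1)[OF x(1)] by simp
    then show "y \<in> He"
      unfolding set_plus_def using decomp(2,3) subspace_neg[OF direct3D(2)[OF direct]] by blast
  qed
  have rho_Hg_image: "rho ` Hg \<subseteq> Hg" using rho_Hg by auto
  have orth: "\<forall>x\<in>He. \<forall>y\<in>Hg. glued_eta x y = 0"
    using glued_eta_He_Hg_orthogonal unfolding form_orthogonal_def by blast
  have "\<forall>x. rho (rho x) = x" "\<forall>x y. glued_eta x y = glued_eta y x"
    "\<forall>x. (\<forall>y. glued_eta x y = 0) \<longrightarrow> x = 0"
    "\<forall>x y. glued_eta (rho x) (rho y) = glued_eta x y"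
    "\<forall>xs. length xs < 3 \<longrightarrow> glued_Y xs = 0"
    using rho_involution glued_eta_sym glued_eta_nondegenerate glued_eta_rho glued_Y_short by blast+
  then show ?thesis
    unfolding pre_Z2_frobenius_def fixed_space_rho
    using fin disj rho_He rho_Hg_image orth frob_eD(1) direct3D(3)[OF direct] He_Hg_spans
      rho_linear rho_Hg glued_eta_bilinear multilinear_on_Y_glue[OF direct frob_eD(7) frob_GD(7)]
      glued_Y_braid degree glued_formal_frobenius
    by (intro conjI) assumption+
qed

end

theorem theorem5p3:
  fixes scale :: "'k::field_char_0 \<Rightarrow> 'v::ab_group_add \<Rightarrow> 'v"
  assumes "vector_space scale"
  shows
   "(\<forall>Hi Hv Hg rho eta_e Y_e eta_G Y_G.
       direct3 scale Hi Hv Hg \<and>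
       Vector_Spaces.linear scale scale rho \<and>
       (\<forall>a\<in>Hi. rho a = a) \<and> (\<forall>b\<in>Hv. rho b = - b) \<and> (\<forall>c\<in>Hg. rho c = c) \<and>
       formal_frobenius scale (set_plus Hi Hv) eta_e Y_e \<and>
       formal_frobenius scale (set_plus Hi Hg) eta_G Y_G \<and>
       (\<forall>x\<in>Hi. \<forall>y\<in>Hi. eta_e x y = eta_G x y) \<and>
       (\<forall>xs. set xs \<subseteq> Hi \<longrightarrow> Y_e xs = Y_G xs) \<and>
       G_degree_e (set_plus Hi Hv) Hg (Y_glue Hi Hv Hg Y_e Y_G) \<and>
       hom2 (pr1 Hi Hv Hg) (eta_i Hi Hv Hg eta_e) \<and>
       hom2 (pr2 Hi Hv Hg) (eta_v Hi Hv Hg eta_e) \<and>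
       hom2 (pr3 Hi Hv Hg) (eta_g Hi Hv Hg eta_e eta_G)
     \<longrightarrow> pre_Z2_frobenius scale (set_plus Hi Hv) Hg rho
           (eta_glue Hi Hv Hg eta_e eta_G) (Y_glue Hi Hv Hg Y_e Y_G))
  \<and>
   (\<forall>He Hg rho eta Y.
       pre_Z2_frobenius scale He Hg rho eta Y \<longrightarrow>
       direct3 scale (He \<inter> fixed_space rho) {x\<in>He. rho x = - x} Hg \<and>
       He = set_plus (He \<inter> fixed_space rho) {x\<in>He. rho x = - x} \<and>
       fixed_space rho = set_plus (He \<inter> fixed_space rho) Hg \<and>
       G_degree_e He Hg (Y_glue (He \<inter> fixed_space rho) {x\<in>He. rho x = - x} Hg Y Y) \<and>
       hom2 (pr1 (He \<inter> fixed_space rho) {x\<in>He. rho x = - x} Hg)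
            (eta_i (He \<inter> fixed_space rho) {x\<in>He. rho x = - x} Hg eta) \<and>
       hom2 (pr2 (He \<inter> fixed_space rho) {x\<in>He. rho x = - x} Hg)
            (eta_v (He \<inter> fixed_space rho) {x\<in>He. rho x = - x} Hg eta) \<and>
       hom2 (pr3 (He \<inter> fixed_space rho) {x\<in>He. rho x = - x} Hg)
            (eta_g (He \<inter> fixed_space rho) {x\<in>He. rho x = - x} Hg eta eta) \<and>
       eta = eta_glue (He \<inter> fixed_space rho) {x\<in>He. rho x = - x} Hg eta eta \<and>
       Y = Y_glue (He \<inter> fixed_space rho) {x\<in>He. rho x = - x} Hg Y Y)
  \<and>
   (\<forall>He Hg rho eta Y eta' Y'.
       pre_Z2_frobenius scale He Hg rho eta Y \<and>
       pre_Z2_frobenius scale He Hg rho eta' Y' \<and>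
       (\<forall>x\<in>He. \<forall>y\<in>He. eta x y = eta' x y) \<and>
       (\<forall>x\<in>fixed_space rho. \<forall>y\<in>fixed_space rho. eta x y = eta' x y) \<and>
       (\<forall>xs. set xs \<subseteq> He \<longrightarrow> Y xs = Y' xs) \<and>
       (\<forall>xs. set xs \<subseteq> fixed_space rho \<longrightarrow> Y xs = Y' xs)
     \<longrightarrow> eta = eta' \<and> Y = Y')"
proof -
  interpret vector_space_char_0 scale by (rule vector_space_char_0.intro) (rule assms)
  note construction = Z2_gluing.glued_pre_Z2_frobenius[OF Z2_gluing.intro[OF
      vector_space_char_0_axioms Z2_gluing_axioms.intro]]
  show ?thesis
    by (intro conjI allI impI; (elim conjE)?)
      (assumption | rule construction pre_Z2_frobenius_structure pre_Z2_frobenius_unique)+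
qed

end
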